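(* Let $G=\mathbb{R}^2\setminus\{-e_1,e_1\}$, where $e_1=(1,0)$. Let $\beta>0$ be the unique positive solution of $\operatorname{arsinh}t+\arctan t=\pi$ ($\beta\approx3.1841$). Then \[ A_G\ge\frac{2\operatorname{arsinh}\beta}{\log\left(1+\frac{2\beta}{\sqrt{1+\beta^2}}\right)}\approx3.5131 . \]
   Context: For a domain $G\subsetneq\mathbb{R}^n$ let $d_G(x)=d(x,\partial G)$; $k_G(x,y)=\inf_\gamma\int_\gamma\frac{|dx|}{d_G(x)}$ over rectifiable curves $\gamma\subset G$ joining $x,y$ (quasihyperbolic distance); $j_G(x,y)=\log\left(1+\frac{|x-y|}{\min\{d_G(x),d_G(y)\}}\right)$; the uniformity constant is $A_G=\inf\{A\ge1: k_G\le A\,j_G\text{ on }G\times G\}$ (with $\inf\emptyset=+\infty$). *)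

theory Defs
  imports "HOL-Analysis.Analysis"
begin

definition is_partition :: "real \<Rightarrow> real \<Rightarrow> (nat \<Rightarrow> real) \<Rightarrow> nat \<Rightarrow> bool" where
  "is_partition a b d n \<longleftrightarrow> d 0 = a \<and> d n = b \<and> (\<forall>i<n. d i \<le> d (Suc i))"

definition polygon_lengths :: "(real \<Rightarrow> 'a::real_normed_vector) \<Rightarrow> real \<Rightarrow> real \<Rightarrow> real set" where
  "polygon_lengths g a b =
     {\<Sum>i<n. norm (g (d (Suc i)) - g (d i)) | d n. is_partition a b d n}"

definition rectifiable_path :: "(real \<Rightarrow> 'a::real_normed_vector) \<Rightarrow> bool" where
  "rectifiable_path g \<longleftrightarrow> path g \<and> bdd_above (polygon_lengths g 0 1)"

definition arc_length :: "(real \<Rightarrow> 'a::real_normed_vector) \<Rightarrow> real \<Rightarrow> real \<Rightarrow> real" where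
  "arc_length g a b = Sup (polygon_lengths g a b)"

definition bdist :: "'a::euclidean_space set \<Rightarrow> 'a \<Rightarrow> real" where
  "bdist G x = infdist x (frontier G)"

text \<open>Quasihyperbolic length of a rectifiable curve, i.e. the arc-length integral
  of 1/d_G along g, defined as the supremum of lower Riemann--Stieltjes sums with
  respect to the arc length (the integrand is continuous and positive on the compact curve).\<close>
definition qh_length :: "'a::euclidean_space set \<Rightarrow> (real \<Rightarrow> 'a) \<Rightarrow> real" where
  "qh_length G g = Sup {\<Sum>i<n. (INF t\<in>{d i..d (Suc i)}. 1 / bdist G (g t)) * arc_length g (d i) (d (Suc i))
                        | d n. is_partition 0 1 d n}"

definition qh_dist :: "'a::euclidean_space set \<Rightarrow> 'a \<Rightarrow> 'a \<Rightarrow> real" where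
  "qh_dist G x y = Inf {qh_length G g | g. rectifiable_path g \<and> path_image g \<subseteq> G
                         \<and> pathstart g = x \<and> pathfinish g = y}"

definition j_dist :: "'a::euclidean_space set \<Rightarrow> 'a \<Rightarrow> 'a \<Rightarrow> real" where
  "j_dist G x y = ln (1 + dist x y / min (bdist G x) (bdist G y))"

text \<open>Uniformity constant A_G, with Inf of the empty set = +infinity (extended reals).\<close>
definition unif_const :: "'a::euclidean_space set \<Rightarrow> ereal" where
  "unif_const G = Inf {ereal A | A. A \<ge> 1 \<and> (\<forall>x\<in>G. \<forall>y\<in>G. qh_dist G x y \<le> A * j_dist G x y)}"

end

theory Submission
  imports Defs
begin

text \<open>A real function h on G whose local Lipschitz constant at every z is at most 1 / d_G(z)
  satisfies h y - h x \<le> k_G(x, y): sum the local estimates along a fine partition of a curve.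
  Identify the plane with \<complex>, so that G = \<complex> - {-1, 1}. On the upper half-plane the functions
  -Im (Arccos z), arg (z - 1) and \<pi> - arg (z + 1) are imaginary parts of holomorphic functions whose
  derivatives have modulus at most 1 / d_G(z), they are nonnegative, and each vanishes on one of the
  intervals (-1, 1), (1, \<infinity>), (-\<infinity>, -1) of the real axis. Hence the odd reflection across the real
  axis of their minimum is an admissible h. At i\<beta> all three equal arsinh \<beta> (this is the equation
  arsinh \<beta> + arctan \<beta> = \<pi>), so k_G(i\<beta>, -i\<beta>) \<ge> 2 arsinh \<beta>, while
  j_G(i\<beta>, -i\<beta>) = log (1 + 2\<beta> / sqrt (1 + \<beta>^2)).\<close>

lemma norm_diff_in_polygon_lengths:
  "a \<le> b \<Longrightarrow> norm (g b - g a) \<in> polygon_lengths g a b"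
  unfolding polygon_lengths_def
  by (intro CollectI exI[of _ "\<lambda>i. if i = 0 then a else b"] exI[of _ "1::nat"])
     (simp add: is_partition_def)

lemma polygon_lengths_append:
  assumes "s1 \<in> polygon_lengths g a b" "s2 \<in> polygon_lengths g b c"
  shows "s1 + s2 \<in> polygon_lengths g a c"
proof -
  obtain d1 n1 where p1: "is_partition a b d1 n1"
    and s1: "s1 = (\<Sum>i<n1. norm (g (d1 (Suc i)) - g (d1 i)))"
    using assms(1) unfolding polygon_lengths_def by blast
  obtain d2 n2 where p2: "is_partition b c d2 n2"
    and s2: "s2 = (\<Sum>i<n2. norm (g (d2 (Suc i)) - g (d2 i)))"
    using assms(2) unfolding polygon_lengths_def by blast
  define d where "d i = (if i \<le> n1 then d1 i else d2 (i - n1))" for i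
  have sum_split: "(\<Sum>i<n1 + n2. f i) = (\<Sum>i<n1. f i) + (\<Sum>i<n2. f (n1 + i))" for f :: "nat \<Rightarrow> real"
    by (induction n2) (simp_all add: add.assoc)
  have "is_partition a c d (n1 + n2)"
    using p1 p2 unfolding is_partition_def d_def
    by (auto simp: Suc_diff_le not_le less_Suc_eq_le)
  moreover have "(\<Sum>i<n1 + n2. norm (g (d (Suc i)) - g (d i))) = s1 + s2"
    unfolding sum_split s1 s2 using p1 p2
    by (intro arg_cong2[where f="(+)"] sum.cong) (auto simp: d_def is_partition_def Suc_diff_le)
  ultimately show ?thesis
    unfolding polygon_lengths_def by (metis (mono_tags, lifting) CollectI)
qed

lemma polygon_lengths_nonneg: "s \<in> polygon_lengths g a b \<Longrightarrow> 0 \<le> s"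
  unfolding polygon_lengths_def by (auto intro: sum_nonneg)

lemma arc_length_split:
  assumes "a \<le> b" "b \<le> c" and bdd: "bdd_above (polygon_lengths g a c)"
  shows "bdd_above (polygon_lengths g a b)" "bdd_above (polygon_lengths g b c)"
    and "arc_length g a b + arc_length g b c \<le> arc_length g a c"
proof -
  have ne1: "norm (g b - g a) \<in> polygon_lengths g a b" and ne2: "norm (g c - g b) \<in> polygon_lengths g b c"
    using assms by (simp_all add: norm_diff_in_polygon_lengths)
  have sum_le: "s1 + s2 \<le> arc_length g a c"
    if "s1 \<in> polygon_lengths g a b" "s2 \<in> polygon_lengths g b c" for s1 s2
    unfolding arc_length_def using polygon_lengths_append[OF that] bdd by (rule cSup_upper)
  show "bdd_above (polygon_lengths g a b)"
  proof (rule bdd_aboveI)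
    fix s assume "s \<in> polygon_lengths g a b"
    then show "s \<le> arc_length g a c"
      using sum_le[OF _ ne2, of s] polygon_lengths_nonneg[OF ne2] by linarith
  qed
  show "bdd_above (polygon_lengths g b c)"
  proof (rule bdd_aboveI)
    fix s assume "s \<in> polygon_lengths g b c"
    then show "s \<le> arc_length g a c"
      using sum_le[OF ne1, of s] polygon_lengths_nonneg[OF ne1] by linarith
  qed
  have "arc_length g a b \<le> arc_length g a c - s2" if "s2 \<in> polygon_lengths g b c" for s2
    unfolding arc_length_def[of g a b] using sum_le[OF _ that] ne1
    by (intro cSup_least) (auto simp: algebra_simps)
  then have "arc_length g b c \<le> arc_length g a c - arc_length g a b"
    unfolding arc_length_def[of g b c] using ne2
    by (intro cSup_least) (auto simp: algebra_simps)
  then show "arc_length g a b + arc_length g b c \<le> arc_length g a c" by simp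
qed

lemma norm_diff_le_arc_length:
  assumes "a \<le> b" "bdd_above (polygon_lengths g a b)"
  shows "norm (g b - g a) \<le> arc_length g a b"
  unfolding arc_length_def using norm_diff_in_polygon_lengths[OF assms(1)] assms(2) by (rule cSup_upper)

lemma is_partition_mono:
  assumes "is_partition a b d n" "i \<le> j" "j \<le> n"
  shows "d i \<le> d j"
  using assms(2,3)
proof (induction j rule: dec_induct)
  case (step k)
  then have "d i \<le> d k" by simp
  moreover have "d k \<le> d (Suc k)" using assms(1) step by (simp add: is_partition_def)
  ultimately show ?case by simp
qed simp

lemma is_partition_bounds:
  assumes "is_partition a b d n" "i \<le> n"
  shows "a \<le> d i" "d i \<le> b"
  using is_partition_mono[OF assms(1), of 0 i] is_partition_mono[OF assms(1), of i n] assms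
  by (auto simp: is_partition_def)

lemma sum_arc_length_partition_le:
  assumes p: "is_partition a b d n" and bdd: "bdd_above (polygon_lengths g a b)"
  shows "\<And>i. i < n \<Longrightarrow> bdd_above (polygon_lengths g (d i) (d (Suc i)))"
    and "(\<Sum>i<n. arc_length g (d i) (d (Suc i))) \<le> arc_length g a b"
proof -
  note bounds = is_partition_bounds[OF p]
  have step: "d k \<le> d (Suc k)" if "k < n" for k
    using p that by (simp add: is_partition_def)
  have bdd_to: "bdd_above (polygon_lengths g a (d k))" if "k \<le> n" for k
    using arc_length_split(1)[OF bounds[OF that] bdd] .
  show "bdd_above (polygon_lengths g (d i) (d (Suc i)))" if "i < n" for i
    using arc_length_split(2)[OF bounds(1)[of i] step[OF that] bdd_to[of "Suc i"]] that by simp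
  have "(\<Sum>i<k. arc_length g (d i) (d (Suc i))) \<le> arc_length g a (d k)" if "k \<le> n" for k
    using that
  proof (induction k)
    case 0
    then show ?case
      using p norm_diff_le_arc_length[of a a g] bdd_to[of 0] by (simp add: is_partition_def)
  next
    case (Suc k)
    then show ?case
      using arc_length_split(3)[OF bounds(1)[of k] step bdd_to[of "Suc k"]] by simp
  qed
  from this[of n] show "(\<Sum>i<n. arc_length g (d i) (d (Suc i))) \<le> arc_length g a b"
    using p by (simp add: is_partition_def)
qed

lemma rectifiable_path_linepath: "rectifiable_path (linepath a b)"
  unfolding rectifiable_path_def
proof
  show "bdd_above (polygon_lengths (linepath a b) 0 1)"
  proof (rule bdd_aboveI)
    fix s assume "s \<in> polygon_lengths (linepath a b) 0 1"
    then obtain d n where p: "is_partition 0 1 d n"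
      and s: "s = (\<Sum>i<n. norm (linepath a b (d (Suc i)) - linepath a b (d i)))"
      unfolding polygon_lengths_def by blast
    have "s = (\<Sum>i<n. (d (Suc i) - d i) * norm (b - a))"
      unfolding s
    proof (rule sum.cong)
      fix i assume "i \<in> {..<n}"
      then have "d i \<le> d (Suc i)" using p by (simp add: is_partition_def)
      moreover have "linepath a b (d (Suc i)) - linepath a b (d i) = (d (Suc i) - d i) *\<^sub>R (b - a)"
        by (simp add: linepath_def algebra_simps)
      ultimately show "norm (linepath a b (d (Suc i)) - linepath a b (d i)) = (d (Suc i) - d i) * norm (b - a)"
        by simp
    qed simp
    also have "\<dots> = norm (b - a)"
      using p by (simp add: sum_distrib_right[symmetric] sum_lessThan_telescope is_partition_def)
    finally show "s \<le> norm (b - a)" by simp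
  qed
qed simp

definition qh_lipschitz :: "'a::euclidean_space set \<Rightarrow> ('a \<Rightarrow> real) \<Rightarrow> bool" where
  "qh_lipschitz G h \<longleftrightarrow> (\<forall>z\<in>G. \<forall>e>0. \<exists>r>0. (1 / bdist G z + e)-lipschitz_on (ball z r) h)"

lemma isCont_inverse_bdist:
  assumes "0 < bdist G z"
  shows "isCont (\<lambda>w. 1 / bdist G w) z"
  using assms unfolding bdist_def by (intro continuous_intros) auto

lemma diff_le_INF_mult_arc_length:
  fixes W :: "'a::real_normed_vector \<Rightarrow> real"
  assumes lip: "(c + e)-lipschitz_on B h" and ab: "a \<le> b"
    and bdd: "bdd_above (polygon_lengths g a b)"
    and sub: "g ` {a..b} \<subseteq> B" and low: "\<And>t. t \<in> {a..b} \<Longrightarrow> c - e \<le> W (g t)"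
  shows "h (g b) - h (g a) \<le> ((INF t\<in>{a..b}. W (g t)) + 2 * e) * arc_length g a b"
proof -
  have arc: "norm (g b - g a) \<le> arc_length g a b"
    using norm_diff_le_arc_length[OF ab bdd] .
  have "g a \<in> B" "g b \<in> B" using sub ab by auto
  then have "h (g b) - h (g a) \<le> (c + e) * dist (g b) (g a)"
    using lipschitz_onD[OF lip] by (metis abs_ge_self dist_real_def order_trans)
  also have "\<dots> \<le> (c + e) * arc_length g a b"
    using arc lipschitz_on_nonneg[OF lip] by (simp add: dist_norm mult_left_mono)
  also have "\<dots> \<le> ((INF t\<in>{a..b}. W (g t)) + 2 * e) * arc_length g a b"
  proof (rule mult_right_mono)
    have "c - e \<le> (INF t\<in>{a..b}. W (g t))"
      using ab low by (intro cINF_greatest) auto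
    then show "c + e \<le> (INF t\<in>{a..b}. W (g t)) + 2 * e" by simp
  qed (use arc in \<open>meson norm_ge_zero order_trans\<close>)
  finally show ?thesis .
qed

lemma path_uniform_partition_subordinate:
  assumes "path g" and r: "\<And>z. z \<in> path_image g \<Longrightarrow> 0 < r z"
  obtains N :: nat where "0 < N"
    "\<And>i. i < N \<Longrightarrow> \<exists>z\<in>path_image g. g ` {real i / N..real (Suc i) / N} \<subseteq> ball z (r z)"
proof -
  have cover: "path_image g \<subseteq> \<Union>((\<lambda>z. ball z (r z)) ` path_image g)"
    using r by force
  obtain \<eta> where \<eta>: "0 < \<eta>"
    "\<And>x. x \<in> path_image g \<Longrightarrow> \<exists>B\<in>(\<lambda>z. ball z (r z)) ` path_image g. ball x \<eta> \<subseteq> B"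
    using Heine_Borel_lemma[OF compact_path_image[OF \<open>path g\<close>] cover] by auto
  have "uniformly_continuous_on {0..1} g"
    using \<open>path g\<close> unfolding path_def by (intro compact_uniformly_continuous) auto
  then obtain \<rho> where \<rho>: "0 < \<rho>"
    "\<And>s t. s \<in> {0..1} \<Longrightarrow> t \<in> {0..1} \<Longrightarrow> dist t s < \<rho> \<Longrightarrow> dist (g t) (g s) < \<eta>"
    unfolding uniformly_continuous_on_def using \<eta>(1) by metis
  obtain N :: nat where N: "0 < N" "inverse (real N) < \<rho>"
    using ex_inverse_of_nat_less[OF \<rho>(1)] by blast
  show ?thesis
  proof (rule that[OF N(1)])
    fix i assume i: "i < N"
    have i_in: "real i / N \<in> {0..1}" using i by auto
    have "g (real i / N) \<in> path_image g" using i_in unfolding path_image_def by blast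
    then obtain z where z: "z \<in> path_image g" "ball (g (real i / N)) \<eta> \<subseteq> ball z (r z)"
      using \<eta>(2) by blast
    have "g t \<in> ball z (r z)" if t: "t \<in> {real i / N..real (Suc i) / N}" for t
    proof -
      have "0 \<le> real i / N" "real (Suc i) / N \<le> 1" using i by simp_all
      then have "t \<in> {0..1}" using t by (meson atLeastAtMost_iff order_trans)
      moreover have "real (Suc i) / N - real i / N = inverse (real N)"
        by (simp add: add_divide_distrib inverse_eq_divide)
      then have "dist t (real i / N) < \<rho>"
        using t N by (auto simp: dist_real_def)
      ultimately have "dist (g t) (g (real i / N)) < \<eta>" using \<rho>(2) i_in by blast
      then show ?thesis using z(2) by (auto simp: dist_commute)
    qed
    then show "\<exists>z\<in>path_image g. g ` {real i / N..real (Suc i) / N} \<subseteq> ball z (r z)"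
      using z(1) by blast
  qed
qed

lemma bdd_above_qh_sums:
  assumes rp: "rectifiable_path g" and img: "path_image g \<subseteq> G"
    and pos: "\<And>z. z \<in> G \<Longrightarrow> 0 < bdist G z"
  shows "bdd_above {\<Sum>i<n. (INF t\<in>{d i..d (Suc i)}. 1 / bdist G (g t)) * arc_length g (d i) (d (Suc i))
                    | d n. is_partition 0 1 d n}"
proof -
  define W where "W z = 1 / bdist G z" for z
  have pg: "path g" and bdd: "bdd_above (polygon_lengths g 0 1)"
    using rp by (auto simp: rectifiable_path_def)
  have W_nonneg: "0 \<le> W z" for z
    unfolding W_def bdist_def by (simp add: infdist_nonneg)
  have "continuous_on (path_image g) W"
    using img pos isCont_inverse_bdist unfolding W_def
    by (intro continuous_at_imp_continuous_on) blast
  then have "bounded (W ` path_image g)"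
    using compact_path_image[OF pg] by (intro compact_imp_bounded compact_continuous_image)
  then obtain M where "\<forall>x\<in>W ` path_image g. norm x \<le> M"
    unfolding bounded_iff by blast
  then have M: "W (g t) \<le> M" if "t \<in> {0..1}" for t
    using that unfolding path_image_def by (metis abs_le_D1 image_eqI real_norm_def)
  have M_nonneg: "0 \<le> M" using M[of 0] W_nonneg[of "g 0"] by simp
  have term_le: "(INF t\<in>{d i..d (Suc i)}. W (g t)) * arc_length g (d i) (d (Suc i))
                   \<le> M * arc_length g (d i) (d (Suc i))"
    if p: "is_partition 0 1 d n" and i: "i < n" for d n i
  proof (rule mult_right_mono)
    have step: "d i \<le> d (Suc i)" using p i by (simp add: is_partition_def)
    have "(INF t\<in>{d i..d (Suc i)}. W (g t)) \<le> W (g (d i))"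
      using step W_nonneg by (intro cINF_lower) (auto intro: bdd_belowI[where m=0])
    also have "\<dots> \<le> M"
      using M is_partition_bounds[OF p, of i] i by simp
    finally show "(INF t\<in>{d i..d (Suc i)}. W (g t)) \<le> M" .
    show "0 \<le> arc_length g (d i) (d (Suc i))"
      using norm_diff_le_arc_length[OF step sum_arc_length_partition_le(1)[OF p bdd i]]
      by (meson norm_ge_zero order_trans)
  qed
  show ?thesis
    unfolding W_def[symmetric]
  proof (rule bdd_aboveI, safe)
    fix d n assume p: "is_partition 0 1 d n"
    have "(\<Sum>i<n. (INF t\<in>{d i..d (Suc i)}. W (g t)) * arc_length g (d i) (d (Suc i)))
            \<le> M * (\<Sum>i<n. arc_length g (d i) (d (Suc i)))"
      unfolding sum_distrib_left by (intro sum_mono term_le[OF p]) simp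
    also have "\<dots> \<le> M * arc_length g 0 1"
      using sum_arc_length_partition_le(2)[OF p bdd] M_nonneg by (rule mult_left_mono)
    finally show "(\<Sum>i<n. (INF t\<in>{d i..d (Suc i)}. W (g t)) * arc_length g (d i) (d (Suc i)))
                    \<le> M * arc_length g 0 1" .
  qed
qed

lemma partition_sum_le_qh_length:
  assumes "rectifiable_path g" "path_image g \<subseteq> G" "\<And>z. z \<in> G \<Longrightarrow> 0 < bdist G z"
    and "is_partition 0 1 d n"
  shows "(\<Sum>i<n. (INF t\<in>{d i..d (Suc i)}. 1 / bdist G (g t)) * arc_length g (d i) (d (Suc i)))
           \<le> qh_length G g"
  unfolding qh_length_def using bdd_above_qh_sums[OF assms(1-3)] assms(4)
  by (intro cSup_upper) auto

lemma qh_lipschitz_local_radius: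
  assumes "qh_lipschitz G h" "z \<in> G" "0 < bdist G z" "0 < e"
  shows "\<exists>r>0. (1 / bdist G z + e)-lipschitz_on (ball z r) h
                \<and> (\<forall>w\<in>ball z r. 1 / bdist G z - e \<le> 1 / bdist G w)"
proof -
  obtain r1 where r1: "0 < r1" "(1 / bdist G z + e)-lipschitz_on (ball z r1) h"
    using assms(1,2,4) unfolding qh_lipschitz_def by blast
  obtain r2 where r2: "0 < r2" "\<And>w. dist w z < r2 \<Longrightarrow> dist (1 / bdist G w) (1 / bdist G z) < e"
    using isCont_inverse_bdist[OF assms(3)] assms(4) unfolding continuous_at_eps_delta by blast
  have "\<forall>w\<in>ball z (min r1 r2). 1 / bdist G z - e \<le> 1 / bdist G w"
  proof
    fix w assume "w \<in> ball z (min r1 r2)"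
    then have "dist (1 / bdist G w) (1 / bdist G z) < e" using r2(2) by (simp add: dist_commute)
    then show "1 / bdist G z - e \<le> 1 / bdist G w" by (simp add: dist_real_def)
  qed
  moreover have "(1 / bdist G z + e)-lipschitz_on (ball z (min r1 r2)) h"
    using r1(2) by (rule lipschitz_on_subset) auto
  ultimately show ?thesis using r1(1) r2(1) by (intro exI[of _ "min r1 r2"]) auto
qed

lemma qh_length_ge_diff_approx:
  assumes rp: "rectifiable_path g" and img: "path_image g \<subseteq> G"
    and pos: "\<And>z. z \<in> G \<Longrightarrow> 0 < bdist G z" and h: "qh_lipschitz G h" and e: "0 < e"
  shows "h (g 1) - h (g 0) \<le> qh_length G g + 2 * e * arc_length g 0 1"
proof -
  define W where "W z = 1 / bdist G z" for z
  have pg: "path g" and bdd: "bdd_above (polygon_lengths g 0 1)"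
    using rp by (auto simp: rectifiable_path_def)
  obtain r where r: "\<And>z. z \<in> path_image g \<Longrightarrow> 0 < r z"
    "\<And>z. z \<in> path_image g \<Longrightarrow> (W z + e)-lipschitz_on (ball z (r z)) h"
    "\<And>z. z \<in> path_image g \<Longrightarrow> \<forall>w\<in>ball z (r z). W z - e \<le> W w"
    using qh_lipschitz_local_radius[OF h _ pos e] img unfolding W_def by (metis subsetD)
  obtain N :: nat where N: "0 < N"
    "\<And>i. i < N \<Longrightarrow> \<exists>z\<in>path_image g. g ` {real i / N..real (Suc i) / N} \<subseteq> ball z (r z)"
    using path_uniform_partition_subordinate[of g r, OF pg r(1)] by blast
  define d where "d i = real i / real N" for i
  have p: "is_partition 0 1 d N"
    using N(1) unfolding is_partition_def d_def by (simp add: divide_right_mono)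
  define INFi where "INFi i = (INF t\<in>{d i..d (Suc i)}. W (g t))" for i
  define ARC where "ARC i = arc_length g (d i) (d (Suc i))" for i
  have step: "h (g (d (Suc i))) - h (g (d i)) \<le> (INFi i + 2 * e) * ARC i" if i: "i < N" for i
  proof -
    obtain z where z: "z \<in> path_image g" "g ` {d i..d (Suc i)} \<subseteq> ball z (r z)"
      using N(2)[OF i] unfolding d_def by blast
    have "d i \<le> d (Suc i)" using p i by (simp add: is_partition_def)
    then show ?thesis
      unfolding INFi_def ARC_def
    proof (rule diff_le_INF_mult_arc_length[OF r(2)[OF z(1)] _ sum_arc_length_partition_le(1)[OF p bdd i] z(2)])
      fix t assume "t \<in> {d i..d (Suc i)}"
      then show "W z - e \<le> W (g t)" using r(3)[OF z(1)] z(2) by blast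
    qed
  qed
  have "h (g 1) - h (g 0) = (\<Sum>i<N. h (g (d (Suc i))) - h (g (d i)))"
    using sum_lessThan_telescope[of "\<lambda>i. h (g (d i))" N] p by (simp add: is_partition_def)
  also have "\<dots> \<le> (\<Sum>i<N. (INFi i + 2 * e) * ARC i)"
    using step by (intro sum_mono) auto
  also have "\<dots> = (\<Sum>i<N. INFi i * ARC i) + 2 * e * (\<Sum>i<N. ARC i)"
    by (simp add: algebra_simps sum.distrib sum_distrib_left)
  also have "(\<Sum>i<N. INFi i * ARC i) \<le> qh_length G g"
    using partition_sum_le_qh_length[OF rp img pos p] unfolding INFi_def ARC_def W_def .
  also have "(\<Sum>i<N. ARC i) \<le> arc_length g 0 1"
    using sum_arc_length_partition_le(2)[OF p bdd] unfolding ARC_def .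
  finally show ?thesis using e by simp
qed

lemma qh_length_ge_diff:
  assumes rp: "rectifiable_path g" and img: "path_image g \<subseteq> G"
    and pos: "\<And>z. z \<in> G \<Longrightarrow> 0 < bdist G z" and h: "qh_lipschitz G h"
  shows "h (pathfinish g) - h (pathstart g) \<le> qh_length G g"
proof -
  define len where "len = arc_length g 0 1"
  have "0 \<le> len"
    using rp norm_diff_le_arc_length[of 0 1 g] unfolding len_def rectifiable_path_def
    by (meson norm_ge_zero order_trans zero_le_one)
  have "h (g 1) - h (g 0) \<le> qh_length G g + e" if e: "0 < e" for e
  proof -
    have "h (g 1) - h (g 0) \<le> qh_length G g + 2 * (e / (2 * len + 1)) * len"
      using qh_length_ge_diff_approx[OF rp img pos h, of "e / (2 * len + 1)"] e \<open>0 \<le> len\<close>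
      unfolding len_def by simp
    also have "2 * (e / (2 * len + 1)) * len \<le> e"
      using e \<open>0 \<le> len\<close> by (simp add: field_simps)
    finally show ?thesis by simp
  qed
  then show ?thesis
    unfolding pathstart_def pathfinish_def by (rule field_le_epsilon)
qed

lemma qh_dist_ge_diff:
  assumes pos: "\<And>z. z \<in> G \<Longrightarrow> 0 < bdist G z" and h: "qh_lipschitz G h"
    and "rectifiable_path g" "path_image g \<subseteq> G" "pathstart g = x" "pathfinish g = y"
  shows "h y - h x \<le> qh_dist G x y"
  unfolding qh_dist_def
proof (rule cInf_greatest)
  have "qh_length G g \<in> {qh_length G g |g. rectifiable_path g \<and> path_image g \<subseteq> G
                                           \<and> pathstart g = x \<and> pathfinish g = y}"
    using assms(3-6) by (intro CollectI exI[of _ g]) simp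
  then show "{qh_length G g |g. rectifiable_path g \<and> path_image g \<subseteq> G
                                \<and> pathstart g = x \<and> pathfinish g = y} \<noteq> {}"
    by (metis empty_iff)
next
  fix s assume "s \<in> {qh_length G g |g. rectifiable_path g \<and> path_image g \<subseteq> G
                                       \<and> pathstart g = x \<and> pathfinish g = y}"
  then obtain \<gamma> where \<gamma>: "rectifiable_path \<gamma>" "path_image \<gamma> \<subseteq> G" "pathstart \<gamma> = x"
    "pathfinish \<gamma> = y" and s: "s = qh_length G \<gamma>"
    by (auto simp only: mem_Collect_eq)
  show "h y - h x \<le> s"
    using qh_length_ge_diff[OF \<gamma>(1,2) pos h] \<gamma>(3,4) s by simp
qed

lemma unif_const_ge_ratio:
  assumes "x \<in> G" "y \<in> G" "c \<le> qh_dist G x y" "0 < j_dist G x y"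
  shows "ereal (c / j_dist G x y) \<le> unif_const G"
  unfolding unif_const_def
proof (rule Inf_greatest, safe)
  fix A :: real assume "\<forall>x\<in>G. \<forall>y\<in>G. qh_dist G x y \<le> A * j_dist G x y"
  then have "c \<le> A * j_dist G x y" using assms(1-3) by (meson order_trans)
  then show "ereal (c / j_dist G x y) \<le> ereal A" using assms(4) by (simp add: divide_le_eq)
qed

definition dist_pm1 :: "complex \<Rightarrow> real" where
  "dist_pm1 z = min (cmod (z - 1)) (cmod (z + 1))"

definition elliptic_coord :: "complex \<Rightarrow> real" where
  "elliptic_coord z = - Im (Arccos z)"

definition angle_right :: "complex \<Rightarrow> real" where
  "angle_right z = Im (Ln (z - 1))"

text \<open>On the upper half-plane this is \<pi> - arg (z + 1); writing it through Ln (-1 - z) moves the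
  branch cut of the logarithm onto [-1, \<infinity>), away from the interval (-\<infinity>, -1) where it vanishes.\<close>
definition angle_left :: "complex \<Rightarrow> real" where
  "angle_left z = - Im (Ln (-1 - z))"

definition test_fun :: "complex \<Rightarrow> real" where
  "test_fun z = min (elliptic_coord z) (min (angle_right z) (angle_left z))"

lemma dist_pm1_pos: "z \<noteq> 1 \<Longrightarrow> z \<noteq> -1 \<Longrightarrow> 0 < dist_pm1 z"
  unfolding dist_pm1_def by (auto simp: add_eq_0_iff minus_equation_iff)

lemma dist_pm1_cnj: "dist_pm1 (cnj z) = dist_pm1 z"
proof -
  have "cnj z - 1 = cnj (z - 1)" "cnj z + 1 = cnj (z + 1)" by simp_all
  then show ?thesis unfolding dist_pm1_def by (simp only: complex_mod_cnj)
qed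

lemma isCont_inverse_dist_pm1: "z \<noteq> 1 \<Longrightarrow> z \<noteq> -1 \<Longrightarrow> isCont (\<lambda>w. 1 / dist_pm1 w) z"
  using dist_pm1_pos[of z] unfolding dist_pm1_def
  by (intro continuous_intros) (auto simp del: min_less_iff_conj)

lemma dist_pm1_le_norm_sin_Arccos: "dist_pm1 z \<le> cmod (sin (Arccos z))"
proof (rule power2_le_imp_le)
  have "(dist_pm1 z)\<^sup>2 \<le> cmod (z - 1) * cmod (z + 1)"
    unfolding dist_pm1_def power2_eq_square by (intro mult_mono) auto
  also have "\<dots> = cmod (1 - z\<^sup>2)"
    by (simp add: norm_mult[symmetric] power2_eq_square algebra_simps norm_minus_commute)
  also have "1 - z\<^sup>2 = (sin (Arccos z))\<^sup>2"
    by (simp add: sin_squared_eq)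
  finally show "(dist_pm1 z)\<^sup>2 \<le> (cmod (sin (Arccos z)))\<^sup>2"
    by (simp add: norm_power)
qed simp

lemma lipschitz_on_Im_of_deriv_bound:
  assumes "convex S" and "\<And>w. w \<in> S \<Longrightarrow> (F has_field_derivative F' w) (at w)"
    and "\<And>w. w \<in> S \<Longrightarrow> cmod (F' w) \<le> B" and "0 \<le> B"
  shows "B-lipschitz_on S (\<lambda>z. Im (F z))"
proof (rule lipschitz_onI)
  fix x y assume "x \<in> S" "y \<in> S"
  then have "cmod (F x - F y) \<le> B * cmod (x - y)"
    using assms(1,3) by (rule_tac field_differentiable_bound)
      (auto intro: has_field_derivative_at_within assms(2))
  then show "dist (Im (F x)) (Im (F y)) \<le> B * dist x y"
    using abs_Im_le_cmod[of "F x - F y"] by (simp add: dist_norm dist_real_def)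
qed fact

lemma lipschitz_on_elliptic_coord:
  assumes "convex S" "0 \<le> L"
    and S: "\<And>w. w \<in> S \<Longrightarrow> (Im w = 0 \<longrightarrow> \<bar>Re w\<bar> < 1) \<and> 1 / dist_pm1 w \<le> L"
  shows "L-lipschitz_on S elliptic_coord"
proof -
  have "L-lipschitz_on S (\<lambda>z. Im (Arccos z))"
  proof (rule lipschitz_on_Im_of_deriv_bound[OF assms(1) has_field_derivative_Arccos _ assms(2)])
    fix w assume w: "w \<in> S"
    then have "w \<noteq> 1" "w \<noteq> -1" using S by force+
    then have "0 < dist_pm1 w" by (rule dist_pm1_pos)
    then have "1 / cmod (sin (Arccos w)) \<le> 1 / dist_pm1 w"
      using dist_pm1_le_norm_sin_Arccos by (intro frac_le) auto
    then show "cmod (- inverse (sin (Arccos w))) \<le> L"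
      using S[OF w] by (simp add: norm_inverse divide_inverse)
  qed (use S in auto)
  then show ?thesis unfolding elliptic_coord_def by simp
qed

lemma lipschitz_on_angle_right:
  assumes "convex S" "0 \<le> L"
    and S: "\<And>w. w \<in> S \<Longrightarrow> (Im w = 0 \<longrightarrow> 1 < Re w) \<and> 1 / dist_pm1 w \<le> L"
  shows "L-lipschitz_on S angle_right"
  unfolding angle_right_def
proof (rule lipschitz_on_Im_of_deriv_bound[OF assms(1) _ _ assms(2)])
  fix w assume w: "w \<in> S"
  then have "w - 1 \<notin> \<real>\<^sub>\<le>\<^sub>0" using S[OF w] by (auto simp: complex_nonpos_Reals_iff)
  then show "((\<lambda>z. Ln (z - 1)) has_field_derivative inverse (w - 1)) (at w)"
    by (auto intro!: derivative_eq_intros)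
  have "w \<noteq> 1" "w \<noteq> -1" using S[OF w] by auto
  then have "1 / cmod (w - 1) \<le> 1 / dist_pm1 w"
    using dist_pm1_pos unfolding dist_pm1_def by (intro divide_left_mono) auto
  then show "cmod (inverse (w - 1)) \<le> L"
    using S[OF w] by (simp add: norm_inverse divide_inverse)
qed

lemma lipschitz_on_angle_left:
  assumes "convex S" "0 \<le> L"
    and S: "\<And>w. w \<in> S \<Longrightarrow> (Im w = 0 \<longrightarrow> Re w < -1) \<and> 1 / dist_pm1 w \<le> L"
  shows "L-lipschitz_on S angle_left"
proof -
  have "L-lipschitz_on S (\<lambda>z. Im (Ln (-1 - z)))"
  proof (rule lipschitz_on_Im_of_deriv_bound[OF assms(1) _ _ assms(2)])
    fix w assume w: "w \<in> S"
    then have "-1 - w \<notin> \<real>\<^sub>\<le>\<^sub>0" using S[OF w] by (auto simp: complex_nonpos_Reals_iff)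
    then show "((\<lambda>z. Ln (-1 - z)) has_field_derivative - inverse (-1 - w)) (at w)"
      by (auto intro!: derivative_eq_intros)
    have "w \<noteq> 1" "w \<noteq> -1" using S[OF w] by auto
    moreover have "cmod (-1 - w) = cmod (w + 1)"
      by (metis minus_diff_eq norm_minus_cancel diff_minus_eq_add)
    ultimately have "1 / cmod (-1 - w) \<le> 1 / dist_pm1 w"
      using dist_pm1_pos unfolding dist_pm1_def by (intro divide_left_mono) auto
    then show "cmod (- inverse (-1 - w)) \<le> L"
      using S[OF w] by (simp add: norm_inverse divide_inverse)
  qed
  then show ?thesis unfolding angle_left_def by simp
qed

lemma lipschitz_on_min:
  fixes f g :: "'a::metric_space \<Rightarrow> real"
  assumes "L-lipschitz_on S f" "L-lipschitz_on S g"
  shows "L-lipschitz_on S (\<lambda>x. min (f x) (g x))"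
proof (rule lipschitz_onI)
  fix x y assume "x \<in> S" "y \<in> S"
  then have "\<bar>f x - f y\<bar> \<le> L * dist x y" "\<bar>g x - g y\<bar> \<le> L * dist x y"
    using assms by (auto dest: lipschitz_onD simp: dist_real_def)
  then show "dist (min (f x) (g x)) (min (f y) (g y)) \<le> L * dist x y"
    by (auto simp: dist_real_def min_def abs_le_iff)
qed (use assms lipschitz_on_nonneg in blast)

lemma lipschitz_on_test_fun:
  assumes "convex S" "0 \<le> L" "\<And>w. w \<in> S \<Longrightarrow> 0 < Im w \<and> 1 / dist_pm1 w \<le> L"
  shows "L-lipschitz_on S test_fun"
  unfolding test_fun_def using assms(1,2)
  by (intro lipschitz_on_min lipschitz_on_elliptic_coord lipschitz_on_angle_right
      lipschitz_on_angle_left) (auto dest: assms(3))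

lemma elliptic_coord_nonneg:
  assumes "0 < Im z"
  shows "0 \<le> elliptic_coord z"
proof -
  define w where "w = Arccos z"
  have "Im (z + \<i> * csqrt (1 - z\<^sup>2)) = Im z + Re (csqrt (1 - z\<^sup>2))" by simp
  then have "0 < Im (z + \<i> * csqrt (1 - z\<^sup>2))"
    using assms Re_csqrt[of "1 - z\<^sup>2"] by linarith
  then have "0 < Re w \<and> Re w < pi"
    unfolding w_def Re_Arccos by (rule Im_Ln_pos_lt_imp)
  then have sin_pos: "0 < sin (Re w)" by (simp add: sin_gt_zero)
  have "Im z = sin (Re w) * (exp (- Im w) - exp (Im w)) / 2"
    unfolding w_def by (metis Im_cos cos_Arccos)
  then have "0 < sin (Re w) * (exp (- Im w) - exp (Im w))"
    using assms by linarith
  then have "exp (Im w) < exp (- Im w)"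
    using sin_pos by (simp add: zero_less_mult_iff)
  then show ?thesis unfolding elliptic_coord_def w_def by simp
qed

lemma angle_right_nonneg: "0 < Im z \<Longrightarrow> 0 \<le> angle_right z"
  unfolding angle_right_def using Im_Ln_pos_lt_imp[of "z - 1"] by simp

lemma angle_left_nonneg:
  assumes "0 < Im z"
  shows "0 \<le> angle_left z"
proof -
  have "-1 - z \<noteq> 0" "Im (-1 - z) < 0" using assms by (auto simp: complex_eq_iff)
  then show ?thesis
    unfolding angle_left_def using Im_Ln_pos_le[of "-1 - z"] Im_Ln_le_pi[of "-1 - z"] by linarith
qed

lemma test_fun_nonneg: "0 < Im z \<Longrightarrow> 0 \<le> test_fun z"
  unfolding test_fun_def using elliptic_coord_nonneg angle_right_nonneg angle_left_nonneg by simp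

lemma elliptic_coord_real: "Im z = 0 \<Longrightarrow> \<bar>Re z\<bar> \<le> 1 \<Longrightarrow> elliptic_coord z = 0"
  unfolding elliptic_coord_def using Im_Arccos_of_real[of "Re z"] by (simp add: complex_is_Real_iff)

lemma angle_right_real:
  assumes "Im z = 0" "1 < Re z"
  shows "angle_right z = 0"
proof -
  have "z - 1 = of_real (Re z - 1)" using assms(1) by (simp add: complex_eq_iff)
  then have "Ln (z - 1) = of_real (ln (Re z - 1))" using Ln_of_real[of "Re z - 1"] assms(2) by simp
  then show ?thesis unfolding angle_right_def by simp
qed

lemma angle_left_real:
  assumes "Im z = 0" "Re z < -1"
  shows "angle_left z = 0"
proof -
  have "-1 - z = of_real (-1 - Re z)" using assms(1) by (simp add: complex_eq_iff)
  then have "Ln (-1 - z) = of_real (ln (-1 - Re z))" using Ln_of_real[of "-1 - Re z"] assms(2) by simp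
  then show ?thesis unfolding angle_left_def by simp
qed

lemma Ln_polar:
  assumes "0 < r" "-pi < t" "t \<le> pi"
  shows "Ln (Complex (r * cos t) (r * sin t)) = Complex (ln r) t"
proof -
  have "exp (Complex (ln r) t) = Complex (r * cos t) (r * sin t)"
    using assms by (simp add: exp_eq_polar complex_eq_iff)
  then show ?thesis using Ln_exp[of "Complex (ln r) t"] assms by simp
qed

lemma test_fun_imag_axis:
  assumes "0 < \<beta>" and "arsinh \<beta> + arctan \<beta> = pi"
  shows "test_fun (Complex 0 \<beta>) = arsinh \<beta>"
proof -
  define r where "r = sqrt (1 + \<beta>\<^sup>2)"
  define t where "t = arctan \<beta>"
  have r: "0 < r" unfolding r_def by (simp add: add_pos_nonneg)
  have cos_t: "r * cos t = 1" and sin_t: "r * sin t = \<beta>"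
    unfolding r_def t_def cos_arctan sin_arctan using r r_def by simp_all
  have t: "0 < t" "t < pi / 2"
    unfolding t_def using assms(1) arctan_bounded[of \<beta>] by auto
  have "1 - (Complex 0 \<beta>)\<^sup>2 = of_real (1 + \<beta>\<^sup>2)"
    by (simp add: complex_eq_iff power2_eq_square)
  then have "csqrt (1 - (Complex 0 \<beta>)\<^sup>2) = of_real r"
    unfolding r_def by (metis csqrt_of_real_nonneg Im_complex_of_real Re_complex_of_real
        add_nonneg_nonneg zero_le_one zero_le_power2)
  then have "elliptic_coord (Complex 0 \<beta>) = ln (\<beta> + r)"
    unfolding elliptic_coord_def Im_Arccos using assms(1) r by (simp add: cmod_def)
  also have "\<dots> = arsinh \<beta>" unfolding arsinh_real_def r_def by (simp add: add.commute)
  finally have ell: "elliptic_coord (Complex 0 \<beta>) = arsinh \<beta>" .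
  have "Complex 0 \<beta> - 1 = Complex (r * cos (pi - t)) (r * sin (pi - t))"
    using cos_t sin_t by (simp add: complex_eq_iff)
  then have "Ln (Complex 0 \<beta> - 1) = Complex (ln r) (pi - t)"
    using Ln_polar[of r "pi - t"] r t by simp
  then have right: "angle_right (Complex 0 \<beta>) = pi - t" unfolding angle_right_def by simp
  have "-1 - Complex 0 \<beta> = Complex (r * cos (t - pi)) (r * sin (t - pi))"
    using cos_t sin_t by (simp add: complex_eq_iff cos_diff sin_diff)
  then have "Ln (-1 - Complex 0 \<beta>) = Complex (ln r) (t - pi)"
    using Ln_polar[of r "t - pi"] r t by simp
  then have left: "angle_left (Complex 0 \<beta>) = pi - t" unfolding angle_left_def by simp
  show ?thesis unfolding test_fun_def ell right left using assms(2) unfolding t_def by simp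
qed

definition odd_reflection :: "(complex \<Rightarrow> real) \<Rightarrow> complex \<Rightarrow> real" where
  "odd_reflection m z = (if 0 < Im z then m z else if Im z < 0 then - m (cnj z) else 0)"

lemma dist_cnj: "dist (cnj x) (cnj y) = dist x y"
  by (metis complex_cnj_diff complex_mod_cnj dist_norm)

lemma cnj_image_ball: "cnj ` ball (cnj z) r = ball z r"
proof -
  have "x \<in> cnj ` ball (cnj z) r \<longleftrightarrow> x \<in> ball z r" for x
    using dist_cnj[of z x] image_iff[of x cnj] by (metis complex_cnj_cnj mem_ball)
  then show ?thesis by blast
qed

lemma lipschitz_on_odd_reflection_cnj:
  assumes "L-lipschitz_on S (odd_reflection m)"
  shows "L-lipschitz_on (cnj ` S) (odd_reflection m)"
proof (rule lipschitz_onI)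
  fix x y assume "x \<in> cnj ` S" "y \<in> cnj ` S"
  then have "cnj x \<in> S" "cnj y \<in> S" by auto
  then have "dist (odd_reflection m (cnj x)) (odd_reflection m (cnj y)) \<le> L * dist (cnj x) (cnj y)"
    using assms by (rule lipschitz_onD[rotated])
  moreover have "odd_reflection m (cnj w) = - odd_reflection m w" for w
    by (simp add: odd_reflection_def)
  ultimately show "dist (odd_reflection m x) (odd_reflection m y) \<le> L * dist x y"
    by (simp add: dist_cnj dist_real_def abs_minus_commute)
qed (use assms lipschitz_on_nonneg in blast)

lemma dist_cnj_real:
  assumes "Im p = 0"
  shows "dist (cnj w) p = dist w p"
proof -
  have "cnj p = p" using assms by (simp add: complex_eq_iff)
  then show ?thesis using dist_cnj[of w p] by simp
qed

lemma cnj_in_ball_real: "Im z0 = 0 \<Longrightarrow> w \<in> ball z0 \<delta> \<Longrightarrow> cnj w \<in> ball z0 \<delta>"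
  using dist_cnj_real[of z0 w] by (simp add: dist_commute)

lemma abs_odd_reflection_le_dist_real:
  assumes z0: "Im z0 = 0"
    and H: "L-lipschitz_on (ball z0 \<delta>) H"
    and H_real: "\<And>w. w \<in> ball z0 \<delta> \<Longrightarrow> Im w = 0 \<Longrightarrow> H w = 0"
    and m_H: "\<And>w. w \<in> ball z0 \<delta> \<Longrightarrow> 0 < Im w \<Longrightarrow> 0 \<le> m w \<and> m w \<le> H w"
    and w: "w \<in> ball z0 \<delta>" and p: "p \<in> ball z0 \<delta>" "Im p = 0"
  shows "\<bar>odd_reflection m w\<bar> \<le> L * dist w p"
proof -
  have upper: "\<bar>m u\<bar> \<le> L * dist u p" if "u \<in> ball z0 \<delta>" "0 < Im u" for u
  proof -
    have "H u - H p \<le> L * dist u p"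
      using lipschitz_onD[OF H that(1) p(1)] by (simp add: dist_real_def)
    then show ?thesis using m_H[OF that] H_real[OF p] by simp
  qed
  consider "0 < Im w" | "Im w < 0" | "Im w = 0" by linarith
  then show ?thesis
  proof cases
    case 1
    then show ?thesis using upper[OF w] by (simp add: odd_reflection_def)
  next
    case 2
    then show ?thesis using upper[OF cnj_in_ball_real[OF z0 w]] dist_cnj_real[OF p(2)]
      by (simp add: odd_reflection_def)
  next
    case 3
    then show ?thesis using lipschitz_on_nonneg[OF H] by (simp add: odd_reflection_def)
  qed
qed

lemma dist_le_across_real_axis:
  fixes f :: "complex \<Rightarrow> real"
  assumes "convex S"
    and to_axis: "\<And>u p. u \<in> S \<Longrightarrow> p \<in> S \<Longrightarrow> Im p = 0 \<Longrightarrow> \<bar>f u\<bar> \<le> L * dist u p"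
    and w: "w \<in> S" "w' \<in> S" and signs: "0 < Im w" "Im w' < 0"
  shows "dist (f w) (f w') \<le> L * dist w w'"
proof -
  define t where "t = Im w / (Im w - Im w')"
  have t: "0 < t" "t < 1" using signs unfolding t_def by (auto simp: divide_less_eq)
  \<comment> \<open>the segment from w to w' crosses the real axis at p\<close>
  define p where "p = (1 - t) *\<^sub>R w + t *\<^sub>R w'"
  have p: "p \<in> S" unfolding p_def using t w by (intro convexD[OF \<open>convex S\<close>]) auto
  have p_real: "Im p = 0" unfolding p_def t_def using signs by (simp add: field_simps)
  have "w - p = t *\<^sub>R (w - w')" "w' - p = (1 - t) *\<^sub>R (w' - w)"
    unfolding p_def by (simp_all add: algebra_simps)
  then have dists: "dist w p = t * dist w w'" "dist w' p = (1 - t) * dist w w'"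
    using t by (simp_all add: dist_norm norm_minus_commute)
  have "dist (f w) (f w') \<le> \<bar>f w\<bar> + \<bar>f w'\<bar>"
    by (simp add: dist_real_def abs_triangle_ineq4)
  also have "\<dots> \<le> L * dist w p + L * dist w' p"
    using to_axis[OF w(1) p p_real] to_axis[OF w(2) p p_real] by (rule add_mono)
  also have "\<dots> = L * dist w w'"
    unfolding dists by (simp add: algebra_simps)
  finally show ?thesis .
qed

lemma lipschitz_on_odd_reflection_near_axis:
  assumes z0: "Im z0 = 0"
    and H: "L-lipschitz_on (ball z0 \<delta>) H"
    and H_real: "\<And>w. w \<in> ball z0 \<delta> \<Longrightarrow> Im w = 0 \<Longrightarrow> H w = 0"
    and m_H: "\<And>w. w \<in> ball z0 \<delta> \<Longrightarrow> 0 < Im w \<Longrightarrow> 0 \<le> m w \<and> m w \<le> H w"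
    and m: "L-lipschitz_on (ball z0 \<delta> \<inter> {w. 0 < Im w}) m"
  shows "L-lipschitz_on (ball z0 \<delta>) (odd_reflection m)"
proof -
  define f where "f = odd_reflection m"
  have to_axis: "\<bar>f w\<bar> \<le> L * dist w p"
    if "w \<in> ball z0 \<delta>" "p \<in> ball z0 \<delta>" "Im p = 0" for w p
    unfolding f_def using z0 H H_real m_H that by (rule abs_odd_reflection_le_dist_real)
  have across: "dist (f w) (f w') \<le> L * dist w w'"
    if "w \<in> ball z0 \<delta>" "w' \<in> ball z0 \<delta>" "0 < Im w" "Im w' < 0" for w w'
    using convex_ball to_axis that by (rule dist_le_across_real_axis)
  show ?thesis
    unfolding f_def[symmetric]
  proof (rule lipschitz_onI)
    fix w w' assume w: "w \<in> ball z0 \<delta>" "w' \<in> ball z0 \<delta>"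
    consider "0 < Im w" "0 < Im w'" | "Im w < 0" "Im w' < 0" | "Im w = 0" | "Im w' = 0"
      | "0 < Im w" "Im w' < 0" | "Im w < 0" "0 < Im w'" by linarith
    then show "dist (f w) (f w') \<le> L * dist w w'"
    proof cases
      case 1 then show ?thesis using lipschitz_onD[OF m] w by (simp add: f_def odd_reflection_def)
    next
      case 2
      then have "dist (m (cnj w)) (m (cnj w')) \<le> L * dist (cnj w) (cnj w')"
        using lipschitz_onD[OF m] cnj_in_ball_real[OF z0] w by simp
      then show ?thesis using 2 by (simp add: f_def odd_reflection_def dist_cnj dist_real_def abs_minus_commute)
    next
      case 3 then show ?thesis using to_axis[OF w(2) w(1) 3]
        by (simp add: f_def odd_reflection_def dist_commute)
    next
      case 4 then show ?thesis using to_axis[OF w 4] by (simp add: f_def odd_reflection_def)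
    next
      case 5 then show ?thesis using across[OF w] by blast
    next
      case 6 then show ?thesis using across[OF w(2,1)] by (simp add: dist_commute)
    qed
  qed (rule lipschitz_on_nonneg[OF H])
qed

lemma abs_Re_diff_lt_of_ball: "w \<in> ball z r \<Longrightarrow> \<bar>Re w - Re z\<bar> < r"
  using abs_Re_le_cmod[of "z - w"] by (simp add: dist_norm abs_minus_commute)

lemma lipschitz_on_odd_reflection_test_fun_near_axis:
  assumes "Im z0 = 0" "0 \<le> L" and dist: "\<And>w. w \<in> ball z0 \<delta> \<Longrightarrow> 1 / dist_pm1 w \<le> L"
    and H: "L-lipschitz_on (ball z0 \<delta>) H" "\<And>w. w \<in> ball z0 \<delta> \<Longrightarrow> Im w = 0 \<Longrightarrow> H w = 0"
    and test_fun_le: "\<And>w. test_fun w \<le> H w"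
  shows "L-lipschitz_on (ball z0 \<delta>) (odd_reflection test_fun)"
proof (rule lipschitz_on_odd_reflection_near_axis[OF assms(1) H])
  show "L-lipschitz_on (ball z0 \<delta> \<inter> {w. 0 < Im w}) test_fun"
    using dist assms(2)
    by (intro lipschitz_on_test_fun convex_Int convex_ball convex_halfspace_Im_gt) auto
qed (use test_fun_le test_fun_nonneg in auto)

lemma odd_reflection_test_fun_local_lipschitz_axis:
  assumes z0: "Im z0 = 0" "z0 \<noteq> 1" "z0 \<noteq> -1" and L: "0 \<le> L"
    and \<delta>0: "0 < \<delta>0" "\<And>w. w \<in> ball z0 \<delta>0 \<Longrightarrow> 1 / dist_pm1 w \<le> L"
  shows "\<exists>\<delta>>0. L-lipschitz_on (ball z0 \<delta>) (odd_reflection test_fun)"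
proof -
  note near_axis = lipschitz_on_odd_reflection_test_fun_near_axis[OF z0(1) L]
  consider "1 < Re z0" | "Re z0 < -1" | "\<bar>Re z0\<bar> < 1"
    using z0 by (cases z0) (auto simp: complex_eq_iff abs_less_iff; linarith)
  then show ?thesis
  proof cases
    case 1
    define \<delta> where "\<delta> = min \<delta>0 (Re z0 - 1)"
    have right: "1 < Re w" if "w \<in> ball z0 \<delta>" for w
      using abs_Re_diff_lt_of_ball[OF that] unfolding \<delta>_def by auto
    have "L-lipschitz_on (ball z0 \<delta>) (odd_reflection test_fun)"
    proof (rule near_axis[OF _ lipschitz_on_angle_right[OF convex_ball L]])
      show "\<And>w. w \<in> ball z0 \<delta> \<Longrightarrow> Im w = 0 \<Longrightarrow> angle_right w = 0"
        using right angle_right_real by blast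
    qed (use right \<delta>0(2) in \<open>auto simp: \<delta>_def test_fun_def\<close>)
    then show ?thesis using 1 \<delta>0(1) by (intro exI[of _ \<delta>]) (auto simp: \<delta>_def)
  next
    case 2
    define \<delta> where "\<delta> = min \<delta>0 (-1 - Re z0)"
    have left: "Re w < -1" if "w \<in> ball z0 \<delta>" for w
      using abs_Re_diff_lt_of_ball[OF that] unfolding \<delta>_def by auto
    have "L-lipschitz_on (ball z0 \<delta>) (odd_reflection test_fun)"
    proof (rule near_axis[OF _ lipschitz_on_angle_left[OF convex_ball L]])
      show "\<And>w. w \<in> ball z0 \<delta> \<Longrightarrow> Im w = 0 \<Longrightarrow> angle_left w = 0"
        using left angle_left_real by blast
    qed (use left \<delta>0(2) in \<open>auto simp: \<delta>_def test_fun_def\<close>)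
    then show ?thesis using 2 \<delta>0(1) by (intro exI[of _ \<delta>]) (auto simp: \<delta>_def)
  next
    case 3
    define \<delta> where "\<delta> = min \<delta>0 (1 - \<bar>Re z0\<bar>)"
    have middle: "\<bar>Re w\<bar> < 1" if "w \<in> ball z0 \<delta>" for w
      using abs_Re_diff_lt_of_ball[OF that] unfolding \<delta>_def by auto
    have "L-lipschitz_on (ball z0 \<delta>) (odd_reflection test_fun)"
    proof (rule near_axis[OF _ lipschitz_on_elliptic_coord[OF convex_ball L]])
      show "\<And>w. w \<in> ball z0 \<delta> \<Longrightarrow> Im w = 0 \<Longrightarrow> elliptic_coord w = 0"
        using middle elliptic_coord_real by (meson less_imp_le)
    qed (use middle \<delta>0(2) in \<open>auto simp: \<delta>_def test_fun_def\<close>)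
    then show ?thesis using 3 \<delta>0(1) by (intro exI[of _ \<delta>]) (auto simp: \<delta>_def)
  qed
qed

lemma odd_reflection_test_fun_local_lipschitz_upper:
  assumes z0: "z0 \<noteq> 1" "z0 \<noteq> -1" "0 \<le> Im z0" and e: "0 < e"
  shows "\<exists>\<delta>>0. (1 / dist_pm1 z0 + e)-lipschitz_on (ball z0 \<delta>) (odd_reflection test_fun)"
proof -
  define L where "L = 1 / dist_pm1 z0 + e"
  have L: "0 \<le> L" unfolding L_def using dist_pm1_pos[OF z0(1,2)] e by simp
  obtain \<delta>0 where \<delta>0: "0 < \<delta>0" "\<And>w. w \<in> ball z0 \<delta>0 \<Longrightarrow> 1 / dist_pm1 w \<le> L"
    using isCont_inverse_dist_pm1[OF z0(1,2)] e unfolding continuous_at_eps_delta L_def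
    by (metis dist_commute dist_real_def abs_diff_less_iff less_eq_real_def mem_ball)
  have "\<exists>\<delta>>0. L-lipschitz_on (ball z0 \<delta>) (odd_reflection test_fun)"
  proof (cases "Im z0 = 0")
    case True
    then show ?thesis using odd_reflection_test_fun_local_lipschitz_axis z0(1,2) L \<delta>0 by blast
  next
    case False
    define \<delta> where "\<delta> = min \<delta>0 (Im z0)"
    have upper: "0 < Im w" if "w \<in> ball z0 \<delta>" for w
      using that abs_Im_le_cmod[of "z0 - w"] unfolding \<delta>_def by (auto simp: dist_norm)
    have "L-lipschitz_on (ball z0 \<delta>) test_fun"
      using \<delta>0(2) upper L unfolding \<delta>_def by (intro lipschitz_on_test_fun) auto
    then have "L-lipschitz_on (ball z0 \<delta>) (odd_reflection test_fun)"
      by (rule lipschitz_on_transform) (simp add: odd_reflection_def upper)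
    then show ?thesis using False z0(3) \<delta>0(1) by (intro exI[of _ \<delta>]) (auto simp: \<delta>_def)
  qed
  then show ?thesis unfolding L_def .
qed

lemma odd_reflection_test_fun_local_lipschitz:
  assumes "z0 \<noteq> 1" "z0 \<noteq> -1" "0 < e"
  shows "\<exists>\<delta>>0. (1 / dist_pm1 z0 + e)-lipschitz_on (ball z0 \<delta>) (odd_reflection test_fun)"
proof (cases "0 \<le> Im z0")
  case True
  then show ?thesis using odd_reflection_test_fun_local_lipschitz_upper assms by blast
next
  case False
  have "cnj z0 \<noteq> 1" "cnj z0 \<noteq> -1" "0 \<le> Im (cnj z0)"
    using assms False by (auto simp: complex_eq_iff)
  then obtain \<delta> where "0 < \<delta>"
    "(1 / dist_pm1 z0 + e)-lipschitz_on (ball (cnj z0) \<delta>) (odd_reflection test_fun)"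
    using odd_reflection_test_fun_local_lipschitz_upper[of "cnj z0" e] assms(3)
    by (auto simp: dist_pm1_cnj)
  then show ?thesis
    using lipschitz_on_odd_reflection_cnj cnj_image_ball[of z0 \<delta>] by metis
qed

definition complex_of_vec :: "real^2 \<Rightarrow> complex" where
  "complex_of_vec v = Complex (v $ 1) (v $ 2)"

definition two_punctured_plane :: "(real^2) set" where
  "two_punctured_plane = UNIV - {vector [-1, 0], vector [1, 0]}"

lemma complex_of_vec_vector [simp]: "complex_of_vec (vector [a, b]) = Complex a b"
  by (simp add: complex_of_vec_def)

lemma dist_complex_of_vec: "dist (complex_of_vec v) (complex_of_vec w) = dist v w"
  by (simp add: dist_norm norm_vec_def L2_set_def sum_2 complex_of_vec_def cmod_def)

lemma frontier_UNIV_minus_finite: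
  fixes S :: "'a::euclidean_space set"
  assumes "finite S"
  shows "frontier (UNIV - S) = S"
proof -
  have "frontier (UNIV - S) = frontier S"
    by (metis Compl_eq_Diff_UNIV frontier_complement)
  also have "\<dots> = S"
    using assms by (simp add: frontier_def closure_closed finite_imp_closed empty_interior_finite)
  finally show ?thesis .
qed

lemma bdist_two_punctured_plane:
  "bdist two_punctured_plane v = dist_pm1 (complex_of_vec v)"
proof -
  have "bdist two_punctured_plane v = infdist v ({vector [-1, 0]} \<union> {vector [1, 0]})"
    unfolding bdist_def two_punctured_plane_def by (simp add: frontier_UNIV_minus_finite insert_commute)
  also have "\<dots> = min (dist v (vector [-1, 0])) (dist v (vector [1, 0]))"
    by (subst infdist_Un_min) auto
  also have "\<dots> = dist_pm1 (complex_of_vec v)"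
  proof -
    have "Complex (-1) 0 = -1" "Complex 1 0 = 1" by (simp_all add: complex_eq_iff)
    then show ?thesis
      unfolding dist_complex_of_vec[symmetric] dist_pm1_def
      by (simp add: dist_norm min.commute)
  qed
  finally show ?thesis .
qed

lemma complex_of_vec_two_punctured_plane:
  assumes "v \<in> two_punctured_plane"
  shows "complex_of_vec v \<noteq> 1" "complex_of_vec v \<noteq> -1"
proof -
  have "v = vector [a, b] \<longleftrightarrow> v $ 1 = a \<and> v $ 2 = b" for a b :: real
    by (simp add: vec_eq_iff forall_2)
  then show "complex_of_vec v \<noteq> 1" "complex_of_vec v \<noteq> -1"
    using assms unfolding two_punctured_plane_def by (auto simp: complex_of_vec_def complex_eq_iff)
qed

lemma bdist_two_punctured_plane_pos: "v \<in> two_punctured_plane \<Longrightarrow> 0 < bdist two_punctured_plane v"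
  unfolding bdist_two_punctured_plane using complex_of_vec_two_punctured_plane dist_pm1_pos by blast

lemma qh_lipschitz_test_fun:
  "qh_lipschitz two_punctured_plane (\<lambda>v. - odd_reflection test_fun (complex_of_vec v))"
  unfolding qh_lipschitz_def
proof (intro ballI allI impI)
  fix z e assume z: "z \<in> two_punctured_plane" and e: "0 < (e::real)"
  obtain \<delta> where \<delta>: "0 < \<delta>"
    "(1 / dist_pm1 (complex_of_vec z) + e)-lipschitz_on (ball (complex_of_vec z) \<delta>) (odd_reflection test_fun)"
    using odd_reflection_test_fun_local_lipschitz[OF complex_of_vec_two_punctured_plane[OF z] e] by blast
  have "1-lipschitz_on (ball z \<delta>) complex_of_vec"
    by (rule lipschitz_onI) (simp_all add: dist_complex_of_vec)
  moreover have "complex_of_vec ` ball z \<delta> \<subseteq> ball (complex_of_vec z) \<delta>"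
    by (auto simp: dist_complex_of_vec)
  ultimately have "((1 / dist_pm1 (complex_of_vec z) + e) * 1)-lipschitz_on (ball z \<delta>)
                      (\<lambda>v. odd_reflection test_fun (complex_of_vec v))"
    using lipschitz_on_subset[OF \<delta>(2)] by (intro lipschitz_on_compose2)
  then show "\<exists>r>0. (1 / bdist two_punctured_plane z + e)-lipschitz_on (ball z r)
                      (\<lambda>v. - odd_reflection test_fun (complex_of_vec v))"
    using \<delta>(1) unfolding bdist_two_punctured_plane by (intro exI[of _ \<delta>]) simp
qed

lemma imag_axis_in_two_punctured_plane: "vector [0, c] \<in> two_punctured_plane"
  using complex_of_vec_two_punctured_plane complex_of_vec_vector
  unfolding two_punctured_plane_def by (auto simp: vec_eq_iff forall_2)

lemma qh_dist_imag_axis_ge: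
  assumes "0 < \<beta>" and "arsinh \<beta> + arctan \<beta> = pi"
  shows "2 * arsinh \<beta> \<le> qh_dist two_punctured_plane (vector [0, \<beta>]) (vector [0, - \<beta>])"
proof -
  define x :: "real^2" where "x = vector [0, \<beta>]"
  define y :: "real^2" where "y = vector [0, - \<beta>]"
  have "path_image (linepath x y) \<subseteq> two_punctured_plane"
  proof
    fix v assume "v \<in> path_image (linepath x y)"
    then have "v = vector [0, v $ 2]"
      unfolding x_def y_def path_image_def linepath_def by (auto simp: vec_eq_iff forall_2)
    then show "v \<in> two_punctured_plane" using imag_axis_in_two_punctured_plane by metis
  qed
  then have "- odd_reflection test_fun (complex_of_vec y) + odd_reflection test_fun (complex_of_vec x)
               \<le> qh_dist two_punctured_plane x y"
    using qh_dist_ge_diff[OF bdist_two_punctured_plane_pos qh_lipschitz_test_fun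
        rectifiable_path_linepath] by simp
  moreover have "odd_reflection test_fun (complex_of_vec x) = arsinh \<beta>"
    "odd_reflection test_fun (complex_of_vec y) = - arsinh \<beta>"
    using test_fun_imag_axis[OF assms] assms(1) complex_cnj[of 0 "- \<beta>"]
    unfolding x_def y_def by (simp_all add: odd_reflection_def)
  ultimately show ?thesis unfolding x_def y_def by simp
qed

lemma j_dist_imag_axis:
  assumes "0 < \<beta>"
  shows "j_dist two_punctured_plane (vector [0, \<beta>]) (vector [0, - \<beta>])
           = ln (1 + 2 * \<beta> / sqrt (1 + \<beta>\<^sup>2))"
  using assms unfolding j_dist_def bdist_two_punctured_plane dist_complex_of_vec[symmetric]
  by (simp add: dist_pm1_def cmod_def dist_norm real_sqrt_mult)

theorem mainTheorem19:
  fixes \<beta> :: real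
  assumes "\<beta> > 0" and "arsinh \<beta> + arctan \<beta> = pi"
  shows "ereal (2 * arsinh \<beta> / ln (1 + 2 * \<beta> / sqrt (1 + \<beta>\<^sup>2)))
           \<le> unif_const (UNIV - {vector [-1, 0], vector [1, 0]} :: (real^2) set)"
proof -
  note j = j_dist_imag_axis[OF assms(1)]
  have "0 < ln (1 + 2 * \<beta> / sqrt (1 + \<beta>\<^sup>2))"
    using assms(1) by (simp add: add_pos_nonneg)
  then have "ereal (2 * arsinh \<beta> / j_dist two_punctured_plane (vector [0, \<beta>]) (vector [0, - \<beta>]))
               \<le> unif_const two_punctured_plane"
    using imag_axis_in_two_punctured_plane qh_dist_imag_axis_ge[OF assms] j
    by (intro unif_const_ge_ratio) simp_all
  then show ?thesis
    unfolding j by (simp only: two_punctured_plane_def)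
qed

end
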